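(* Let $k\ge1$ and $K>0$. There is a constant $C$ (depending only on $k$ and $K$) such that for all $n$ and all $B,B'\in M_n(\mathbb C)^{\mathbb N}$ with $B_0=uv^*$, $B'_0=u'v'^*$ for some vectors $u,v,u',v'\in\mathbb C^n$ and $\|B_t\|,\|B'_t\|\le K$ for $0\le t\le k-1$, $$|\Sigma_k(B,B')-\hat\Sigma_k(B,B')|\le Cn^{-1}\quad\text{and}\quad|\Sigma'_k(B,B')-\hat\Sigma'_k(B,B')|\le Cn^{-1}.$$
   Context: Let $\rho\in[0,1]$. $\|\cdot\|$ is the operator norm. $P_k$ is the set of $\pi=(j_1,i_1,\dots,j_k,i_k)\in\{1,\dots,n\}^{2k}$ with convention $i_0=i_k$; $M_\pi(B)=n^{-(k-1)/2}\prod_{t=0}^{k-1}(B_t)_{i_tj_{t+1}}$; $Q_k\subset P_k$ is the set of $\pi$ such that the pairs $(j_t,i_t)$, $1\le t\le k$, are pairwise distinct. $\Sigma_k(B,B')=n^{-k+1}\prod_{t=0}^{k-1}\operatorname{Tr}(B_tB_t'^* )$, $\Sigma'_k(B,B')=\rho^kn^{-k+1}\prod_{t=0}^{k-1}\operatorname{Tr}(B_tB_t'^\intercal)$, $\hat\Sigma_k(B,B')=\sum_{\pi\in Q_k}M_\pi(B)\overline{M_\pi(B')}$, $\hat\Sigma'_k(B,B')=\rho^k\sum_{\pi\in Q_k}M_\pi(B)M_\pi(B')$. *)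

theory Defs
  imports "HOL-Analysis.Analysis"
begin

text \<open>n x n complex matrices are represented as functions nat => nat => complex,
  indices 0..n-1 (entries outside the range are irrelevant); vectors in C^n as
  nat => complex. Sequences of matrices (B_t) are nat => nat => nat => complex,
  with B t i j the (i,j) entry of B_t.\<close>

definition vnorm :: "nat \<Rightarrow> (nat \<Rightarrow> complex) \<Rightarrow> real" where
  "vnorm n x = sqrt (\<Sum>i<n. (cmod (x i))\<^sup>2)"

definition mvmult :: "nat \<Rightarrow> (nat \<Rightarrow> nat \<Rightarrow> complex) \<Rightarrow> (nat \<Rightarrow> complex) \<Rightarrow> (nat \<Rightarrow> complex)" where
  "mvmult n A x = (\<lambda>i. \<Sum>j<n. A i j * x j)"

definition opnorm :: "nat \<Rightarrow> (nat \<Rightarrow> nat \<Rightarrow> complex) \<Rightarrow> real" where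
  "opnorm n A = Sup {vnorm n (mvmult n A x) | x. vnorm n x \<le> 1}"

definition mmult :: "nat \<Rightarrow> (nat \<Rightarrow> nat \<Rightarrow> complex) \<Rightarrow> (nat \<Rightarrow> nat \<Rightarrow> complex) \<Rightarrow> (nat \<Rightarrow> nat \<Rightarrow> complex)" where
  "mmult n A B = (\<lambda>i j. \<Sum>l<n. A i l * B l j)"

definition ctransp :: "(nat \<Rightarrow> nat \<Rightarrow> complex) \<Rightarrow> (nat \<Rightarrow> nat \<Rightarrow> complex)" where
  "ctransp A = (\<lambda>i j. cnj (A j i))"

definition transp :: "(nat \<Rightarrow> nat \<Rightarrow> complex) \<Rightarrow> (nat \<Rightarrow> nat \<Rightarrow> complex)" where
  "transp A = (\<lambda>i j. A j i)"

definition mtrace :: "nat \<Rightarrow> (nat \<Rightarrow> nat \<Rightarrow> complex) \<Rightarrow> complex" where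
  "mtrace n A = (\<Sum>i<n. A i i)"

definition Sigma :: "nat \<Rightarrow> nat \<Rightarrow> (nat \<Rightarrow> nat \<Rightarrow> nat \<Rightarrow> complex) \<Rightarrow> (nat \<Rightarrow> nat \<Rightarrow> nat \<Rightarrow> complex) \<Rightarrow> complex" where
  "Sigma n k B B' = of_real (real n powr (1 - real k)) *
      (\<Prod>t<k. mtrace n (mmult n (B t) (ctransp (B' t))))"

definition Sigma' :: "real \<Rightarrow> nat \<Rightarrow> nat \<Rightarrow> (nat \<Rightarrow> nat \<Rightarrow> nat \<Rightarrow> complex) \<Rightarrow> (nat \<Rightarrow> nat \<Rightarrow> nat \<Rightarrow> complex) \<Rightarrow> complex" where
  "Sigma' \<rho> n k B B' = of_real (\<rho> ^ k) * of_real (real n powr (1 - real k)) *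
      (\<Prod>t<k. mtrace n (mmult n (B t) (transp (B' t))))"

text \<open>A tuple pi = (j_1,i_1,...,j_k,i_k) in {1..n}^{2k} is represented (0-based indices)
  by a pair of functions (j,i) on {1..k} with values in {0..<n}.\<close>
definition Pk :: "nat \<Rightarrow> nat \<Rightarrow> ((nat \<Rightarrow> nat) \<times> (nat \<Rightarrow> nat)) set" where
  "Pk n k = ({1..k} \<rightarrow>\<^sub>E {..<n}) \<times> ({1..k} \<rightarrow>\<^sub>E {..<n})"

definition Qk :: "nat \<Rightarrow> nat \<Rightarrow> ((nat \<Rightarrow> nat) \<times> (nat \<Rightarrow> nat)) set" where
  "Qk n k = {\<pi> \<in> Pk n k. inj_on (\<lambda>t. (fst \<pi> t, snd \<pi> t)) {1..k}}"

definition Mpi :: "nat \<Rightarrow> nat \<Rightarrow> ((nat \<Rightarrow> nat) \<times> (nat \<Rightarrow> nat)) \<Rightarrow> (nat \<Rightarrow> nat \<Rightarrow> nat \<Rightarrow> complex) \<Rightarrow> complex" where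
  "Mpi n k \<pi> B = of_real (real n powr (- (real k - 1) / 2)) *
      (\<Prod>t<k. B t (if t = 0 then snd \<pi> k else snd \<pi> t) (fst \<pi> (t + 1)))"

definition Sigma_hat :: "nat \<Rightarrow> nat \<Rightarrow> (nat \<Rightarrow> nat \<Rightarrow> nat \<Rightarrow> complex) \<Rightarrow> (nat \<Rightarrow> nat \<Rightarrow> nat \<Rightarrow> complex) \<Rightarrow> complex" where
  "Sigma_hat n k B B' = (\<Sum>\<pi>\<in>Qk n k. Mpi n k \<pi> B * cnj (Mpi n k \<pi> B'))"

definition Sigma_hat' :: "real \<Rightarrow> nat \<Rightarrow> nat \<Rightarrow> (nat \<Rightarrow> nat \<Rightarrow> nat \<Rightarrow> complex) \<Rightarrow> (nat \<Rightarrow> nat \<Rightarrow> nat \<Rightarrow> complex) \<Rightarrow> complex" where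
  "Sigma_hat' \<rho> n k B B' = of_real (\<rho> ^ k) * (\<Sum>\<pi>\<in>Qk n k. Mpi n k \<pi> B * Mpi n k \<pi> B')"

end

(*
  Sigma_k(B, B') is Sigma'_k(B, conj B') at rho = 1, so only Sigma'_k needs treatment.
  Expanding the traces, Sigma'_k is rho^k n^(1-k) times the sum over all of P_k of the
  products prod_t G_t(i_t, j_(t+1)), G_t the entrywise product of B_t and B'_t, and
  hat Sigma'_k is rho^k n^(1-k) times the same sum restricted to Q_k. A tuple outside Q_k has
  j_s = j_t for some s < t, i.e. two edges of the closed walk i_0 -> j_1, i_1 -> j_2, ...
  end in the same column. In the sum over such tied tuples the later edge only contributes a
  column sum of |G_t|, which is at most K^2 by Cauchy-Schwarz because the columns of B_t have
  length at most ||B_t||; every other edge contributes a full sum, at most n K^2, except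
  edge 0, whose full sum is at most K^2 because B_0 and B'_0 have rank one (their Frobenius
  norm is their operator norm). So each of the at most k^2 ways to tie two edges contributes
  n^(k-2) K^(2k), against the normalisation n^(1-k).
*)

theory Submission
  imports Defs
begin

lemma vnorm_eq_L2_set: "vnorm n x = L2_set (\<lambda>i. cmod (x i)) {..<n}"
  by (simp add: vnorm_def L2_set_def)

lemma bdd_above_opnorm_set: "bdd_above {vnorm n (mvmult n A x) | x. vnorm n x \<le> 1}"
proof (rule bdd_aboveI)
  fix y assume "y \<in> {vnorm n (mvmult n A x) | x. vnorm n x \<le> 1}"
  then obtain x where y: "y = vnorm n (mvmult n A x)" and x: "vnorm n x \<le> 1" by auto
  have x_le: "cmod (x j) \<le> 1" if "j < n" for j
    using member_le_L2_set[of "{..<n}" j "\<lambda>i. cmod (x i)"] x that by (simp add: vnorm_eq_L2_set)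
  have "y \<le> (\<Sum>i<n. \<bar>cmod (\<Sum>j<n. A i j * x j)\<bar>)"
    unfolding y vnorm_eq_L2_set mvmult_def by (rule L2_set_le_sum_abs)
  also have "\<dots> \<le> (\<Sum>i<n. \<Sum>j<n. cmod (A i j))"
  proof (rule sum_mono)
    fix i
    have "cmod (\<Sum>j<n. A i j * x j) \<le> (\<Sum>j<n. cmod (A i j * x j))"
      by (rule norm_sum)
    also have "\<dots> \<le> (\<Sum>j<n. cmod (A i j))"
      using x_le by (intro sum_mono) (simp add: norm_mult mult_left_le)
    finally show "\<bar>cmod (\<Sum>j<n. A i j * x j)\<bar> \<le> (\<Sum>j<n. cmod (A i j))" by simp
  qed
  finally show "y \<le> (\<Sum>i<n. \<Sum>j<n. cmod (A i j))" by simp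
qed

lemma vnorm_mvmult_le_opnorm: "vnorm n x \<le> 1 \<Longrightarrow> vnorm n (mvmult n A x) \<le> opnorm n A"
  unfolding opnorm_def by (rule cSup_upper[OF _ bdd_above_opnorm_set]) auto

lemma L2_set_column_le_opnorm:
  assumes "c < n"
  shows "L2_set (\<lambda>r. cmod (A r c)) {..<n} \<le> opnorm n A"
proof -
  define e where "e = (\<lambda>j. if j = c then 1 else 0 :: complex)"
  have "vnorm n e = 1"
    using assms by (simp add: vnorm_def e_def if_distrib[of "\<lambda>z. (cmod z)\<^sup>2"] sum.delta cong: if_cong)
  moreover have "mvmult n A e = (\<lambda>r. A r c)"
    using assms by (simp add: mvmult_def e_def fun_eq_iff if_distrib sum.delta cong: if_cong)
  ultimately show ?thesis
    using vnorm_mvmult_le_opnorm[of n e A] by (simp add: vnorm_eq_L2_set)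
qed

lemma vnorm_nonneg: "0 \<le> vnorm n x"
  by (simp add: vnorm_eq_L2_set)

lemma opnorm_nonneg: "0 \<le> opnorm n A"
  by (rule order.trans[OF vnorm_nonneg vnorm_mvmult_le_opnorm[of n "\<lambda>_. 0"]])
    (simp add: vnorm_def)

lemma vnorm_scale: "vnorm n (\<lambda>i. c * x i) = cmod c * vnorm n x"
  by (simp add: vnorm_eq_L2_set norm_mult L2_set_right_distrib)

lemma vnorm_cong: "(\<And>i. i < n \<Longrightarrow> x i = y i) \<Longrightarrow> vnorm n x = vnorm n y"
  by (simp add: vnorm_def)

lemma L2_set_rank_one_le_opnorm:
  assumes A: "\<forall>i<n. \<forall>j<n. A i j = u i * cnj (v j)"
  shows "L2_set (\<lambda>x. cmod (A (fst x) (snd x))) ({..<n} \<times> {..<n}) \<le> opnorm n A"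
proof -
  have frobenius: "L2_set (\<lambda>x. cmod (A (fst x) (snd x))) ({..<n} \<times> {..<n}) = vnorm n u * vnorm n v"
  proof -
    have "(\<Sum>x\<in>{..<n} \<times> {..<n}. (cmod (A (fst x) (snd x)))\<^sup>2)
        = (\<Sum>i<n. (cmod (u i))\<^sup>2) * (\<Sum>j<n. (cmod (v j))\<^sup>2)"
      using A by (simp add: sum.cartesian_product' sum_product norm_mult power_mult_distrib)
    then show ?thesis by (simp add: L2_set_def vnorm_def real_sqrt_mult)
  qed
  show ?thesis
  proof (cases "vnorm n v = 0")
    case True
    then show ?thesis using opnorm_nonneg by (simp add: frobenius)
  next
    case False
    define x where "x = (\<lambda>j. complex_of_real (1 / vnorm n v) * v j)"
    have "vnorm n x = 1"
      unfolding x_def vnorm_scale using False vnorm_nonneg[of n v] by (simp add: norm_divide)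
    moreover have "vnorm n (mvmult n A x) = vnorm n u * vnorm n v"
    proof -
      have norm_v: "(\<Sum>j<n. cnj (v j) * v j) = complex_of_real ((vnorm n v)\<^sup>2)"
        by (simp add: vnorm_def sum_nonneg complex_norm_square mult.commute flip: of_real_power)
      have "mvmult n A x i = complex_of_real (vnorm n v) * u i" if "i < n" for i
      proof -
        have "mvmult n A x i = u i * (\<Sum>j<n. cnj (v j) * v j) / complex_of_real (vnorm n v)"
          using A that by (simp add: mvmult_def x_def sum_distrib_left sum_divide_distrib mult_ac)
        then show ?thesis
          using False by (simp add: norm_v power2_eq_square)
      qed
      then have "vnorm n (mvmult n A x) = vnorm n (\<lambda>i. complex_of_real (vnorm n v) * u i)"
        by (rule vnorm_cong)
      then show ?thesis
        by (simp add: vnorm_scale vnorm_nonneg)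
    qed
    ultimately show ?thesis
      using vnorm_mvmult_le_opnorm[of n x A] by (simp add: frobenius)
  qed
qed

lemma sum_column_norm_mult_le_opnorm:
  assumes "c < n"
  shows "(\<Sum>r<n. cmod (A r c) * cmod (A' r c)) \<le> opnorm n A * opnorm n A'"
proof -
  have "(\<Sum>r<n. cmod (A r c) * cmod (A' r c))
      \<le> L2_set (\<lambda>r. cmod (A r c)) {..<n} * L2_set (\<lambda>r. cmod (A' r c)) {..<n}"
    using L2_set_mult_ineq[of "\<lambda>r. cmod (A r c)" "\<lambda>r. cmod (A' r c)" "{..<n}"] by simp
  also have "\<dots> \<le> opnorm n A * opnorm n A'"
    using assms by (intro mult_mono L2_set_column_le_opnorm opnorm_nonneg L2_set_nonneg)
  finally show ?thesis .
qed

lemma sum_norm_mult_le_opnorm_rank_one: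
  assumes "\<forall>i<n. \<forall>j<n. A i j = u i * cnj (v j)" and "\<forall>i<n. \<forall>j<n. A' i j = u' i * cnj (v' j)"
  shows "(\<Sum>x\<in>{..<n} \<times> {..<n}. cmod (A (fst x) (snd x)) * cmod (A' (fst x) (snd x)))
    \<le> opnorm n A * opnorm n A'"
proof -
  have "(\<Sum>x\<in>{..<n} \<times> {..<n}. cmod (A (fst x) (snd x)) * cmod (A' (fst x) (snd x)))
      \<le> L2_set (\<lambda>x. cmod (A (fst x) (snd x))) ({..<n} \<times> {..<n})
        * L2_set (\<lambda>x. cmod (A' (fst x) (snd x))) ({..<n} \<times> {..<n})"
    using L2_set_mult_ineq[of "\<lambda>x. cmod (A (fst x) (snd x))" "\<lambda>x. cmod (A' (fst x) (snd x))"] by simp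
  also have "\<dots> \<le> opnorm n A * opnorm n A'"
    using assms by (intro mult_mono L2_set_rank_one_le_opnorm opnorm_nonneg L2_set_nonneg)
  finally show ?thesis .
qed

lemma finite_Pk: "finite (Pk n k)"
  by (simp add: Pk_def finite_PiE)

lemma Qk_subset_Pk: "Qk n k \<subseteq> Pk n k"
  by (auto simp: Qk_def)

definition walk_edges :: "nat \<Rightarrow> (nat \<Rightarrow> nat) \<times> (nat \<Rightarrow> nat) \<Rightarrow> nat \<Rightarrow> nat \<times> nat" where
  "walk_edges k \<pi> = (\<lambda>t\<in>{..<k}. (if t = 0 then snd \<pi> k else snd \<pi> t, fst \<pi> (t + 1)))"

definition walk_of_edges :: "nat \<Rightarrow> (nat \<Rightarrow> nat \<times> nat) \<Rightarrow> (nat \<Rightarrow> nat) \<times> (nat \<Rightarrow> nat)" where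
  "walk_of_edges k p =
     ((\<lambda>t\<in>{1..k}. snd (p (t - 1))), (\<lambda>t\<in>{1..k}. fst (p (if t = k then 0 else t))))"

lemma bij_betw_walk_edges:
  assumes "1 \<le> k"
  shows "bij_betw (walk_edges k) (Pk n k) (PiE {..<k} (\<lambda>_. {..<n} \<times> {..<n}))"
proof (rule bij_betw_byWitness[where f' = "walk_of_edges k"])
  show "\<forall>\<pi>\<in>Pk n k. walk_of_edges k (walk_edges k \<pi>) = \<pi>"
  proof (clarify)
    fix j i assume "(j, i) \<in> Pk n k"
    then have "restrict j {1..k} = j" "restrict i {1..k} = i"
      by (auto simp: Pk_def PiE_def extensional_restrict)
    moreover have "walk_of_edges k (walk_edges k (j, i)) = (restrict j {1..k}, restrict i {1..k})"
      using assms by (auto simp: walk_of_edges_def walk_edges_def intro!: restrict_ext)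
    ultimately show "walk_of_edges k (walk_edges k (j, i)) = (j, i)" by simp
  qed
  show "\<forall>p\<in>PiE {..<k} (\<lambda>_. {..<n} \<times> {..<n}). walk_edges k (walk_of_edges k p) = p"
  proof
    fix p assume p: "p \<in> PiE {..<k} (\<lambda>_. {..<n} \<times> {..<n})"
    then have "restrict p {..<k} = p"
      by (simp add: PiE_def extensional_restrict)
    moreover have "walk_edges k (walk_of_edges k p) = restrict p {..<k}"
      using assms by (auto simp: walk_of_edges_def walk_edges_def intro!: restrict_ext)
    ultimately show "walk_edges k (walk_of_edges k p) = p" by simp
  qed
  show "walk_edges k ` Pk n k \<subseteq> PiE {..<k} (\<lambda>_. {..<n} \<times> {..<n})"
  proof (rule image_subsetI)
    fix \<pi> assume "\<pi> \<in> Pk n k"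
    then have j: "fst \<pi> t < n" and i: "snd \<pi> t < n" if "t \<in> {1..k}" for t
      using that by (auto simp: Pk_def)
    show "walk_edges k \<pi> \<in> PiE {..<k} (\<lambda>_. {..<n} \<times> {..<n})"
      using assms i j by (simp add: walk_edges_def)
  qed
  show "walk_of_edges k ` PiE {..<k} (\<lambda>_. {..<n} \<times> {..<n}) \<subseteq> Pk n k"
  proof (rule image_subsetI)
    fix p assume "p \<in> PiE {..<k} (\<lambda>_. {..<n} \<times> {..<n})"
    then have "fst (p e) < n \<and> snd (p e) < n" if "e < k" for e
      using that by (auto simp: PiE_iff mem_Times_iff)
    then show "walk_of_edges k p \<in> Pk n k"
      using assms by (auto simp: Pk_def walk_of_edges_def)
  qed
qed

lemma sum_Pk_prod_walk_edges:
  assumes "1 \<le> k"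
  shows "(\<Sum>\<pi>\<in>Pk n k. \<Prod>t<k. G t (walk_edges k \<pi> t))
    = (\<Prod>t<k. \<Sum>x\<in>{..<n} \<times> {..<n}. G t x :: 'a :: comm_semiring_1)"
  using sum.reindex_bij_betw[OF bij_betw_walk_edges[OF assms], of "\<lambda>p. \<Prod>t<k. G t (p t)"]
  by (simp add: prod_sum_PiE)

lemma not_Qk_imp_repeated_column:
  assumes "\<pi> \<in> Pk n k - Qk n k"
  obtains a b where "a < b" "b < k" "snd (walk_edges k \<pi> a) = snd (walk_edges k \<pi> b)"
proof -
  from assms obtain s t where "s \<in> {1..k}" "t \<in> {1..k}" "s < t" "fst \<pi> s = fst \<pi> t"
    unfolding Qk_def inj_on_def by (auto elim!: allE linorder_neqE_nat)
  then show ?thesis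
    using that[of "s - 1" "t - 1"] by (simp add: walk_edges_def)
qed

lemma sum_PiE_tied_columns:
  fixes W :: "'i \<Rightarrow> 'r \<times> 'c \<Rightarrow> 'a :: comm_semiring_1"
  assumes "finite I" "finite R" "finite C" "a \<in> I" "b \<in> I" "a \<noteq> b"
  shows "(\<Sum>p\<in>PiE I (\<lambda>_. R \<times> C). if snd (p a) = snd (p b) then \<Prod>e\<in>I. W e (p e) else 0)
    = (\<Sum>c\<in>C. (\<Sum>r\<in>R. W a (r, c)) * (\<Sum>r\<in>R. W b (r, c))) * (\<Prod>e\<in>I - {a, b}. \<Sum>x\<in>R \<times> C. W e x)"
proof -
  define h where "h c e x = (if e \<notin> {a, b} \<or> snd x = c then W e x else 0)" for c e x
  have split_ab: "prod f I = f a * f b * prod f (I - {a, b})" for f :: "'i \<Rightarrow> 'a"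
    using prod.subset_diff[of "{a, b}" I f] assms by (simp add: mult_ac)
  have tie: "(if snd (p a) = snd (p b) then \<Prod>e\<in>I. W e (p e) else 0) = (\<Sum>c\<in>C. \<Prod>e\<in>I. h c e (p e))"
    if "p \<in> PiE I (\<lambda>_. R \<times> C)" for p
  proof -
    have "(\<Prod>e\<in>I. h c e (p e)) = (if snd (p a) = c \<and> snd (p b) = c then \<Prod>e\<in>I. W e (p e) else 0)" for c
      unfolding split_ab[of "\<lambda>e. h c e (p e)"] split_ab[of "\<lambda>e. W e (p e)"]
      by (auto simp: h_def intro!: prod.cong)
    moreover have "snd (p a) \<in> C"
      using that assms by (auto simp: PiE_iff mem_Times_iff)
    ultimately show ?thesis
      using \<open>finite C\<close> by (cases "snd (p a) = snd (p b)") (auto simp: sum.delta' intro!: sum.neutral)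
  qed
  have column: "(\<Sum>x\<in>R \<times> C. h c e x) = (\<Sum>r\<in>R. W e (r, c))" if "c \<in> C" "e \<in> {a, b}" for c e
    using that assms by (auto simp: h_def sum.cartesian_product' sum.delta')
  have rest: "(\<Prod>e\<in>I - {a, b}. \<Sum>x\<in>R \<times> C. h c e x) = (\<Prod>e\<in>I - {a, b}. \<Sum>x\<in>R \<times> C. W e x)" for c
    by (rule prod.cong) (auto simp: h_def)
  have "(\<Sum>p\<in>PiE I (\<lambda>_. R \<times> C). if snd (p a) = snd (p b) then \<Prod>e\<in>I. W e (p e) else 0)
      = (\<Sum>c\<in>C. \<Prod>e\<in>I. \<Sum>x\<in>R \<times> C. h c e x)"
    using assms by (simp add: tie sum.swap[of _ _ C] prod_sum_PiE)
  also have "\<dots> = (\<Sum>c\<in>C. (\<Sum>r\<in>R. W a (r, c)) * (\<Sum>r\<in>R. W b (r, c)) * (\<Prod>e\<in>I - {a, b}. \<Sum>x\<in>R \<times> C. W e x))"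
    using assms by (intro sum.cong refl) (simp add: split_ab column rest)
  finally show ?thesis
    by (simp add: sum_distrib_right)
qed

lemma sum_PiE_tied_columns_le:
  fixes W :: "nat \<Rightarrow> nat \<times> nat \<Rightarrow> real"
  assumes nonneg: "\<And>e x. 0 \<le> W e x"
    and column: "\<And>e c. e < k \<Longrightarrow> c < n \<Longrightarrow> (\<Sum>r<n. W e (r, c)) \<le> L"
    and total: "(\<Sum>x\<in>{..<n} \<times> {..<n}. W 0 x) \<le> L"
    and ab: "a < b" "b < k"
  shows "(\<Sum>p\<in>PiE {..<k} (\<lambda>_. {..<n} \<times> {..<n}). if snd (p a) = snd (p b) then \<Prod>e<k. W e (p e) else 0)
    \<le> real n ^ (k - 2) * L ^ k"
proof -
  define T where "T e = (\<Sum>x\<in>{..<n} \<times> {..<n}. W e x)" for e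
  have T_nonneg: "0 \<le> T e" for e
    by (simp add: T_def sum_nonneg nonneg)
  have L_nonneg: "0 \<le> L"
    using T_nonneg[of 0] total by (simp add: T_def)
  have T_eq: "T e = (\<Sum>c<n. \<Sum>r<n. W e (r, c))" for e
    unfolding T_def sum.cartesian_product' by (rule sum.swap)
  have T_le: "T e \<le> real n * L" if "e < k" for e
    using sum_mono[of "{..<n}" "\<lambda>c. \<Sum>r<n. W e (r, c)" "\<lambda>_. L"] column that by (simp add: T_eq)
  have "(\<Sum>p\<in>PiE {..<k} (\<lambda>_. {..<n} \<times> {..<n}). if snd (p a) = snd (p b) then \<Prod>e<k. W e (p e) else 0)
      = (\<Sum>c<n. (\<Sum>r<n. W a (r, c)) * (\<Sum>r<n. W b (r, c))) * (\<Prod>e\<in>{..<k} - {a, b}. T e)"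
    using ab by (simp add: sum_PiE_tied_columns T_def)
  also have "\<dots> \<le> (\<Sum>c<n. (\<Sum>r<n. W a (r, c)) * L) * (\<Prod>e\<in>{..<k} - {a, b}. T e)"
  proof (intro mult_right_mono sum_mono mult_left_mono)
    show "(\<Sum>r<n. W b (r, c)) \<le> L" if "c \<in> {..<n}" for c
      using column ab that by simp
  qed (simp_all add: sum_nonneg nonneg prod_nonneg T_nonneg)
  also have "\<dots> = L * (T 0 * (\<Prod>e\<in>{..<k} - {0, b}. T e))"
  proof -
    have "{..<k} - {b} - {a} = {..<k} - {a, b}" "{..<k} - {b} - {0} = {..<k} - {0, b}"
      by auto
    then have "T a * (\<Prod>e\<in>{..<k} - {a, b}. T e) = T 0 * (\<Prod>e\<in>{..<k} - {0, b}. T e)"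
      using ab prod.remove[of "{..<k} - {b}" a T] prod.remove[of "{..<k} - {b}" 0 T] by simp
    moreover have "(\<Sum>c<n. (\<Sum>r<n. W a (r, c)) * L) = T a * L"
      by (simp add: T_eq sum_distrib_right)
    ultimately show ?thesis
      by (simp add: mult_ac)
  qed
  also have "\<dots> \<le> L * (L * (real n * L) ^ (k - 2))"
  proof (intro mult_left_mono mult_mono L_nonneg)
    have "(\<Prod>e\<in>{..<k} - {0, b}. T e) \<le> (\<Prod>e\<in>{..<k} - {0, b}. real n * L)"
      using T_le T_nonneg by (intro prod_mono) auto
    also have "\<dots> = (real n * L) ^ (k - 2)"
      using ab by (simp add: card_Diff_subset numeral_2_eq_2)
    finally show "(\<Prod>e\<in>{..<k} - {0, b}. T e) \<le> (real n * L) ^ (k - 2)" .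
  qed (simp_all add: prod_nonneg T_nonneg total[folded T_def])
  also have "\<dots> = real n ^ (k - 2) * L ^ k"
  proof -
    obtain m where "k = 2 + m"
      using le_Suc_ex[of 2 k] ab by auto
    then show ?thesis
      by (simp add: power_add power_mult_distrib power2_eq_square mult_ac)
  qed
  finally show ?thesis .
qed

lemma sum_not_Qk_le:
  fixes W :: "nat \<Rightarrow> nat \<times> nat \<Rightarrow> real"
  assumes k: "1 \<le> k"
    and nonneg: "\<And>e x. 0 \<le> W e x"
    and column: "\<And>e c. e < k \<Longrightarrow> c < n \<Longrightarrow> (\<Sum>r<n. W e (r, c)) \<le> L"
    and total: "(\<Sum>x\<in>{..<n} \<times> {..<n}. W 0 x) \<le> L"
  shows "(\<Sum>\<pi>\<in>Pk n k - Qk n k. \<Prod>e<k. W e (walk_edges k \<pi> e)) \<le> real (k * k) * (real n ^ (k - 2) * L ^ k)"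
proof -
  define F where "F p = (\<Prod>e<k. W e (p e))" for p
  define tied where
    "tied ab p = (if fst ab < snd ab \<and> snd (p (fst ab)) = snd (p (snd ab)) then F p else 0)" for ab p
  define bound where "bound = real n ^ (k - 2) * L ^ k"
  have tied_nonneg: "0 \<le> tied ab p" for ab p
    by (simp add: tied_def F_def prod_nonneg nonneg)
  have "F (walk_edges k \<pi>) \<le> (\<Sum>ab\<in>{..<k} \<times> {..<k}. tied ab (walk_edges k \<pi>))"
    if \<pi>: "\<pi> \<in> Pk n k - Qk n k" for \<pi>
  proof -
    obtain a b where ab: "a < b" "b < k" "snd (walk_edges k \<pi> a) = snd (walk_edges k \<pi> b)"
      by (rule not_Qk_imp_repeated_column[OF \<pi>])
    then have "F (walk_edges k \<pi>) = tied (a, b) (walk_edges k \<pi>)"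
      by (simp add: tied_def)
    also have "\<dots> \<le> (\<Sum>ab\<in>{..<k} \<times> {..<k}. tied ab (walk_edges k \<pi>))"
      using ab by (intro member_le_sum tied_nonneg) auto
    finally show ?thesis .
  qed
  then have "(\<Sum>\<pi>\<in>Pk n k - Qk n k. F (walk_edges k \<pi>))
      \<le> (\<Sum>\<pi>\<in>Pk n k - Qk n k. \<Sum>ab\<in>{..<k} \<times> {..<k}. tied ab (walk_edges k \<pi>))"
    by (rule sum_mono)
  also have "\<dots> \<le> (\<Sum>\<pi>\<in>Pk n k. \<Sum>ab\<in>{..<k} \<times> {..<k}. tied ab (walk_edges k \<pi>))"
    by (intro sum_mono2 sum_nonneg tied_nonneg finite_Pk) auto
  also have "\<dots> = (\<Sum>p\<in>PiE {..<k} (\<lambda>_. {..<n} \<times> {..<n}). \<Sum>ab\<in>{..<k} \<times> {..<k}. tied ab p)"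
    by (rule sum.reindex_bij_betw[OF bij_betw_walk_edges[OF k]])
  also have "\<dots> = (\<Sum>ab\<in>{..<k} \<times> {..<k}. \<Sum>p\<in>PiE {..<k} (\<lambda>_. {..<n} \<times> {..<n}). tied ab p)"
    by (rule sum.swap)
  also have "\<dots> \<le> (\<Sum>ab\<in>{..<k} \<times> {..<k}. bound)"
  proof (rule sum_mono)
    fix ab assume "ab \<in> {..<k} \<times> {..<k}"
    then obtain a b where ab: "ab = (a, b)" "b < k"
      by auto
    show "(\<Sum>p\<in>PiE {..<k} (\<lambda>_. {..<n} \<times> {..<n}). tied ab p) \<le> bound"
    proof (cases "a < b")
      case True
      then show ?thesis
        unfolding tied_def F_def bound_def
        using sum_PiE_tied_columns_le[where W = W and k = k, OF nonneg column total True] ab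
        by simp
    next
      case False
      have "0 \<le> L"
        using total by (meson nonneg order_trans sum_nonneg)
      then show ?thesis
        using False by (simp add: tied_def bound_def ab)
    qed
  qed
  finally show ?thesis
    by (simp add: F_def bound_def)
qed

lemma norm_trace_product_minus_Qk_sum_le:
  fixes G :: "nat \<Rightarrow> nat \<times> nat \<Rightarrow> complex"
  assumes k: "1 \<le> k" and n: "1 \<le> n"
    and column: "\<And>e c. e < k \<Longrightarrow> c < n \<Longrightarrow> (\<Sum>r<n. cmod (G e (r, c))) \<le> L"
    and total: "(\<Sum>x\<in>{..<n} \<times> {..<n}. cmod (G 0 x)) \<le> L"
  shows "cmod (of_real (real n powr (1 - real k)) *
      ((\<Prod>e<k. \<Sum>x\<in>{..<n} \<times> {..<n}. G e x) - (\<Sum>\<pi>\<in>Qk n k. \<Prod>e<k. G e (walk_edges k \<pi> e))))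
    \<le> real (k * k) * L ^ k / real n"
    (is "cmod (_ * (?trace - ?Q)) \<le> _")
proof -
  define D where "D = (\<Sum>\<pi>\<in>Pk n k - Qk n k. \<Prod>e<k. G e (walk_edges k \<pi> e))"
  have "?trace - ?Q = D"
    by (simp add: D_def sum_diff[OF finite_Pk Qk_subset_Pk] sum_Pk_prod_walk_edges[OF k])
  then have lhs: "cmod (of_real (real n powr (1 - real k)) * (?trace - ?Q)) = real n powr (1 - real k) * cmod D"
    by (simp add: norm_mult)
  have L: "0 \<le> L"
    using total by (meson norm_ge_zero order_trans sum_nonneg)
  show ?thesis
  proof (cases "k = 1")
    case True
    then have "D = 0"
      by (auto simp: D_def Qk_def intro: sum.neutral)
    then show ?thesis
      using L by (simp add: lhs)
  next
    case False
    have "cmod D \<le> (\<Sum>\<pi>\<in>Pk n k - Qk n k. \<Prod>e<k. cmod (G e (walk_edges k \<pi> e)))"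
      unfolding D_def using norm_sum by (simp add: prod_norm)
    also have "\<dots> \<le> real (k * k) * (real n ^ (k - 2) * L ^ k)"
      by (rule sum_not_Qk_le[OF k]) (simp_all add: column total)
    finally have D_le: "cmod D \<le> real (k * k) * (real n ^ (k - 2) * L ^ k)" .
    have "real n powr (1 - real k) * real n ^ (k - 2) = real n powr (1 - real k + real (k - 2))"
      using n by (simp add: powr_add powr_realpow)
    also have "\<dots> = 1 / real n"
      using k False by (simp add: of_nat_diff powr_minus_divide)
    finally have scale: "real n powr (1 - real k) * real n ^ (k - 2) = 1 / real n" .
    have "real n powr (1 - real k) * cmod D
        \<le> real n powr (1 - real k) * (real (k * k) * (real n ^ (k - 2) * L ^ k))"
      using D_le by (rule mult_left_mono) simp
    also have "\<dots> = real (k * k) * L ^ k * (real n powr (1 - real k) * real n ^ (k - 2))"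
      by (simp add: mult_ac)
    finally show ?thesis
      by (simp add: lhs scale)
  qed
qed

lemma Mpi_walk_edges:
  "Mpi n k \<pi> B = of_real (real n powr (- (real k - 1) / 2)) *
     (\<Prod>t<k. B t (fst (walk_edges k \<pi> t)) (snd (walk_edges k \<pi> t)))"
  by (simp add: Mpi_def walk_edges_def)

lemma Sigma_eq_Sigma'_cnj: "Sigma n k B B' = Sigma' 1 n k B (\<lambda>t i j. cnj (B' t i j))"
  by (simp add: Sigma_def Sigma'_def ctransp_def transp_def)

lemma Sigma_hat_eq_Sigma_hat'_cnj: "Sigma_hat n k B B' = Sigma_hat' 1 n k B (\<lambda>t i j. cnj (B' t i j))"
  by (simp add: Sigma_hat_def Sigma_hat'_def Mpi_def)

lemma Sigma'_minus_Sigma_hat':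
  assumes G: "G = (\<lambda>t x. B t (fst x) (snd x) * B' t (fst x) (snd x))"
  shows "Sigma' \<rho> n k B B' - Sigma_hat' \<rho> n k B B' = of_real (\<rho> ^ k) * (of_real (real n powr (1 - real k)) *
    ((\<Prod>t<k. \<Sum>x\<in>{..<n} \<times> {..<n}. G t x) - (\<Sum>\<pi>\<in>Qk n k. \<Prod>t<k. G t (walk_edges k \<pi> t))))"
proof -
  have trace: "mtrace n (mmult n (B t) (transp (B' t))) = (\<Sum>x\<in>{..<n} \<times> {..<n}. G t x)" for t
    by (simp add: mtrace_def mmult_def transp_def G sum.cartesian_product')
  have "Mpi n k \<pi> B * Mpi n k \<pi> B'
      = of_real (real n powr (- (real k - 1) / 2) * real n powr (- (real k - 1) / 2)) *
        (\<Prod>t<k. G t (walk_edges k \<pi> t))" for \<pi>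
    by (simp add: Mpi_walk_edges G prod.distrib mult_ac)
  then have "Mpi n k \<pi> B * Mpi n k \<pi> B' = of_real (real n powr (1 - real k)) * (\<Prod>t<k. G t (walk_edges k \<pi> t))" for \<pi>
    by (simp flip: powr_add)
  then show ?thesis
    by (simp add: Sigma'_def Sigma_hat'_def trace sum_distrib_left right_diff_distrib mult.assoc)
qed

lemma norm_Sigma'_minus_Sigma_hat'_le:
  fixes B B' B'' :: "nat \<Rightarrow> nat \<Rightarrow> nat \<Rightarrow> complex"
  assumes k: "1 \<le> k" and n: "1 \<le> n" and \<rho>: "0 \<le> \<rho>" "\<rho> \<le> 1"
    and rank_one: "\<forall>i<n. \<forall>j<n. B 0 i j = u i * cnj (v j) \<and> B' 0 i j = u' i * cnj (v' j)"
    and opnorm: "\<forall>t<k. opnorm n (B t) \<le> K \<and> opnorm n (B' t) \<le> K"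
    and B'': "\<And>t i j. cmod (B'' t i j) = cmod (B' t i j)"
  shows "cmod (Sigma' \<rho> n k B B'' - Sigma_hat' \<rho> n k B B'') \<le> real (k * k) * (K\<^sup>2) ^ k / real n"
proof -
  define G where "G = (\<lambda>t x. B t (fst x) (snd x) * B'' t (fst x) (snd x))"
  have norm_G: "cmod (G t x) = cmod (B t (fst x) (snd x)) * cmod (B' t (fst x) (snd x))" for t x
    by (simp add: G_def norm_mult B'')
  have opnorm_prod: "opnorm n (B t) * opnorm n (B' t) \<le> K\<^sup>2" if "t < k" for t
    using opnorm that mult_mono[of "opnorm n (B t)" K "opnorm n (B' t)" K]
      order_trans[OF opnorm_nonneg, of n "B t" K]
    by (simp add: power2_eq_square opnorm_nonneg)
  show ?thesis
    unfolding Sigma'_minus_Sigma_hat'[OF G_def] norm_mult[of "of_real (\<rho> ^ k)"]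
  proof (rule order_trans[OF mult_left_le_one_le norm_trace_product_minus_Qk_sum_le[OF k n]])
    show "(\<Sum>r<n. cmod (G t (r, c))) \<le> K\<^sup>2" if "t < k" "c < n" for t c
      using sum_column_norm_mult_le_opnorm[OF that(2), of "B t" "B' t"] opnorm_prod[OF that(1)]
      by (simp add: norm_G)
    show "(\<Sum>x\<in>{..<n} \<times> {..<n}. cmod (G 0 x)) \<le> K\<^sup>2"
      using sum_norm_mult_le_opnorm_rank_one[of n "B 0" u v "B' 0" u' v'] rank_one opnorm_prod[of 0] k
      by (simp add: norm_G)
  qed (simp_all add: \<rho> norm_power power_le_one)
qed

theorem lemma6p4:
  fixes k :: nat and K :: real
  assumes "k \<ge> 1" and "K > 0"
  shows "\<exists>C::real. \<forall>\<rho>::real. \<forall>n::nat.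
    \<forall>B B' :: nat \<Rightarrow> nat \<Rightarrow> nat \<Rightarrow> complex. \<forall>u v u' v' :: nat \<Rightarrow> complex.
      0 \<le> \<rho> \<longrightarrow> \<rho> \<le> 1 \<longrightarrow> n \<ge> 1 \<longrightarrow>
      (\<forall>i<n. \<forall>j<n. B 0 i j = u i * cnj (v j) \<and> B' 0 i j = u' i * cnj (v' j)) \<longrightarrow>
      (\<forall>t<k. opnorm n (B t) \<le> K \<and> opnorm n (B' t) \<le> K) \<longrightarrow>
      cmod (Sigma n k B B' - Sigma_hat n k B B') \<le> C / real n \<and>
      cmod (Sigma' \<rho> n k B B' - Sigma_hat' \<rho> n k B B') \<le> C / real n"
proof (intro exI[of _ "real (k * k) * (K\<^sup>2) ^ k"] allI impI conjI)
  fix \<rho> :: real and n :: nat and B B' :: "nat \<Rightarrow> nat \<Rightarrow> nat \<Rightarrow> complex" and u v u' v' :: "nat \<Rightarrow> complex"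
  assume \<rho>: "0 \<le> \<rho>" "\<rho> \<le> 1" and n: "1 \<le> n"
    and rank_one: "\<forall>i<n. \<forall>j<n. B 0 i j = u i * cnj (v j) \<and> B' 0 i j = u' i * cnj (v' j)"
    and opnorm: "\<forall>t<k. opnorm n (B t) \<le> K \<and> opnorm n (B' t) \<le> K"
  note bound = norm_Sigma'_minus_Sigma_hat'_le[OF assms(1) n _ _ rank_one opnorm]
  show "cmod (Sigma n k B B' - Sigma_hat n k B B') \<le> real (k * k) * (K\<^sup>2) ^ k / real n"
    using bound[of 1 "\<lambda>t i j. cnj (B' t i j)"] by (simp add: Sigma_eq_Sigma'_cnj Sigma_hat_eq_Sigma_hat'_cnj)
  show "cmod (Sigma' \<rho> n k B B' - Sigma_hat' \<rho> n k B B') \<le> real (k * k) * (K\<^sup>2) ^ k / real n"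
    using bound[of \<rho> B'] \<rho> by simp
qed

end
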